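(* In the atomic model under the Shapley scheme with exactly one large player of stake $a$ and all other players of stake $1$, if the total number of players satisfies $n\ge (2h-1)^2+h$, then the Price of Stability is at most $2$.
   Context: Atomic model with threshold $h$: $n$ players, one of stake $a$ and $n-1$ of stake $1$, where $h,a$ are integers with $2\le a\le h-1$. Each player opens her own pool or joins one; pools partition the players; a pool $S$ has reward $\rho(S)=1$ if its total stake is at least $h$ (winning) and $0$ otherwise. Shapley scheme: player $i$ in pool $S$ receives $\phi_i(S)=\sum_{T\subseteq S\setminus\{i\}}\frac{|T|!(|S|-|T|-1)!}{|S|!}(\rho(T\cup\{i\})-\rho(T))$. A partition into winning pools is a Nash equilibrium if no player can strictly increase her payment by moving to another pool of the partition or opening a new pool alone. $OPT(G)$ is the maximum number of pools of stake at least $h$ in a partition of the players; $W(\Pi)$ is the number of winning pools of $\Pi$; the Price of Stability is $\min_\Pi OPT(G)/W(\Pi)$ over Nash equilibrium partitions. *)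

theory Defs
  imports Complex_Main "HOL-Library.Disjoint_Sets"
begin

definition players :: "nat \<Rightarrow> nat set" where
  "players n = {0..<n}"

definition stake :: "nat \<Rightarrow> nat \<Rightarrow> nat" where
  "stake a i = (if i = 0 then a else 1)"

definition pool_stake :: "nat \<Rightarrow> nat set \<Rightarrow> nat" where
  "pool_stake a S = (\<Sum>i\<in>S. stake a i)"

definition rho :: "nat \<Rightarrow> nat \<Rightarrow> nat set \<Rightarrow> real" where
  "rho h a S = (if pool_stake a S \<ge> h then 1 else 0)"

definition winning :: "nat \<Rightarrow> nat \<Rightarrow> nat set \<Rightarrow> bool" where
  "winning h a S \<longleftrightarrow> pool_stake a S \<ge> h"

definition shapley :: "nat \<Rightarrow> nat \<Rightarrow> nat \<Rightarrow> nat set \<Rightarrow> real" where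
  "shapley h a i S =
     (\<Sum>T\<in>Pow (S - {i}).
        (fact (card T) * fact (card S - card T - 1) / fact (card S))
        * (rho h a (insert i T) - rho h a T))"

definition is_NE :: "nat \<Rightarrow> nat \<Rightarrow> nat \<Rightarrow> nat set set \<Rightarrow> bool" where
  "is_NE n h a P \<longleftrightarrow>
     partition_on (players n) P \<and>
     (\<forall>S\<in>P. winning h a S) \<and>
     (\<forall>S\<in>P. \<forall>i\<in>S.
        (\<forall>S'\<in>P. S' \<noteq> S \<longrightarrow> shapley h a i (insert i S') \<le> shapley h a i S) \<and>
        shapley h a i {i} \<le> shapley h a i S)"

definition W :: "nat \<Rightarrow> nat \<Rightarrow> nat set set \<Rightarrow> nat" where
  "W h a P = card {S\<in>P. winning h a S}"

definition OPT :: "nat \<Rightarrow> nat \<Rightarrow> nat \<Rightarrow> nat" where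
  "OPT n h a = Max {W h a P | P. partition_on (players n) P}"

definition PoS :: "nat \<Rightarrow> nat \<Rightarrow> nat \<Rightarrow> real" where
  "PoS n h a = Min {real (OPT n h a) / real (W h a P) | P. is_NE n h a P}"

end

theory Submission
  imports Defs
begin

text \<open>
  Put the large player together with m unit players into a mixed pool and split the remaining
  unit players into blocks of 2h - 2 or 2h - 1 players; the lower bound on n is what makes this
  split possible. Every player then earns at least her stake divided by 2h - 1 in her own pool,
  while moving to another pool pays at most that much: a block grown to 2h - 1 or more players
  pays a unit player at most 1/(2h - 1), and m is taken maximal such that the unit players of the
  mixed pool still earn 1/(2h - 1). So the partition is an equilibrium whose pools all win. The
  blocks have stake below 2h and the mixed pool below 3h, so the total stake, which bounds h OPT,
  is below h (2 W + 1), whence OPT \<le> 2 W.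
\<close>

section \<open>Shapley values as averages over positions\<close>

lemma sum_Pow_card:
  fixes g :: "nat \<Rightarrow> 'a::comm_semiring_1"
  assumes "finite A"
  shows "(\<Sum>T\<in>Pow A. g (card T)) = (\<Sum>t\<le>card A. of_nat (card A choose t) * g t)"
proof -
  have "(\<Sum>T\<in>Pow A. g (card T)) = (\<Sum>t\<le>card A. \<Sum>T\<in>{T \<in> Pow A. card T = t}. g (card T))"
    by (rule sum.group[symmetric]) (use assms card_mono in auto)
  also have "\<dots> = (\<Sum>t\<le>card A. of_nat (card A choose t) * g t)"
  proof (rule sum.cong[OF refl])
    fix t
    have "(\<Sum>T\<in>{T \<in> Pow A. card T = t}. g (card T)) = of_nat (card {T. T \<subseteq> A \<and> card T = t}) * g t"
      by simp
    then show "(\<Sum>T\<in>{T \<in> Pow A. card T = t}. g (card T)) = of_nat (card A choose t) * g t"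
      by (simp add: n_subsets[OF assms])
  qed
  finally show ?thesis .
qed

lemma sum_Pow_insert:
  assumes "finite A" "x \<notin> A"
  shows "(\<Sum>T\<in>Pow (insert x A). f T) = (\<Sum>T\<in>Pow A. f T) + (\<Sum>T\<in>Pow A. f (insert x T))"
proof -
  have "inj_on (insert x) (Pow A)"
    using assms(2) by (intro inj_onI) (metis PowD insert_ident subsetD)
  then show ?thesis
    unfolding Pow_insert using assms
    by (subst sum.union_disjoint) (auto simp: sum.reindex)
qed

definition shapley_weight :: "nat \<Rightarrow> nat \<Rightarrow> real" where
  "shapley_weight s t = fact t * fact (s - t - 1) / fact s"

lemma shapley_eq_weighted_sum:
  "shapley h a i S = (\<Sum>T\<in>Pow (S - {i}).
     shapley_weight (card S) (card T) * (rho h a (insert i T) - rho h a T))"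
  unfolding shapley_def shapley_weight_def ..

lemma binomial_fact_real:
  assumes "t \<le> k"
  shows "fact t * fact (k - t) * real (k choose t) = fact k"
  using binomial_fact_lemma[OF assms] by (metis of_nat_fact of_nat_mult)

lemma binomial_times_shapley_weight:
  assumes "t < s"
  shows "real (s - 1 choose t) * shapley_weight s t = 1 / real s"
proof -
  obtain k where s: "s = Suc k" and t: "t \<le> k"
    using assms by (metis less_Suc_eq_le not0_implies_Suc not_less0)
  have "real (s - 1 choose t) * shapley_weight s t
      = (fact t * fact (k - t) * real (k choose t)) / (real (Suc k) * fact k)"
    unfolding shapley_weight_def s by (simp add: algebra_simps)
  also have "\<dots> = 1 / real s"
    unfolding binomial_fact_real[OF t] s by simp
  finally show ?thesis .
qed

lemma binomial_times_shapley_weight_without: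
  assumes "t < m"
  shows "real (m - 1 choose t) * shapley_weight (m + 1) t = real (m - t) / (real m * real (m + 1))"
proof -
  obtain k where m: "m = Suc k" and t: "t \<le> k"
    using assms by (metis less_Suc_eq_le not0_implies_Suc not_less0)
  have "real (m - 1 choose t) * shapley_weight (m + 1) t
      = real (Suc (k - t)) * (fact t * fact (k - t) * real (k choose t))
        / (real (Suc k) * real (Suc (Suc k)) * fact k)"
    unfolding shapley_weight_def m using t by (simp add: Suc_diff_le algebra_simps)
  also have "\<dots> = real (m - t) / (real m * real (m + 1))"
    unfolding binomial_fact_real[OF t] m using t by (simp add: Suc_diff_le)
  finally show ?thesis .
qed

lemma binomial_times_shapley_weight_with:
  assumes "t < m"
  shows "real (m - 1 choose t) * shapley_weight (m + 1) (t + 1) = real (t + 1) / (real m * real (m + 1))"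
proof -
  obtain k where m: "m = Suc k" and t: "t \<le> k"
    using assms by (metis less_Suc_eq_le not0_implies_Suc not_less0)
  have "real (m - 1 choose t) * shapley_weight (m + 1) (t + 1)
      = real (Suc t) * (fact t * fact (k - t) * real (k choose t))
        / (real (Suc k) * real (Suc (Suc k)) * fact k)"
    unfolding shapley_weight_def m using t by (simp add: algebra_simps)
  also have "\<dots> = real (t + 1) / (real m * real (m + 1))"
    unfolding binomial_fact_real[OF t] m by simp
  finally show ?thesis .
qed

lemma shapley_eq_average:
  assumes "finite S" "i \<in> S"
    and "\<And>T. T \<subseteq> S - {i} \<Longrightarrow> rho h a (insert i T) - rho h a T = \<delta> (card T)"
  shows "shapley h a i S = (\<Sum>t<card S. \<delta> t) / real (card S)"
proof -
  have card: "card (S - {i}) = card S - 1" "0 < card S"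
    using assms by (auto simp: card_gt_0_iff)
  have "shapley h a i S = (\<Sum>T\<in>Pow (S - {i}). shapley_weight (card S) (card T) * \<delta> (card T))"
    unfolding shapley_eq_weighted_sum by (rule sum.cong) (use assms(3) in auto)
  also have "\<dots> = (\<Sum>t\<le>card S - 1. real (card S - 1 choose t) * (shapley_weight (card S) t * \<delta> t))"
    using sum_Pow_card[of "S - {i}" "\<lambda>t. shapley_weight (card S) t * \<delta> t"] assms(1) card(1)
    by simp
  also have "\<dots> = (\<Sum>t<card S. \<delta> t / real (card S))"
    using card(2) binomial_times_shapley_weight
    by (intro sum.cong) (auto simp flip: mult.assoc)
  finally show ?thesis
    by (simp add: sum_divide_distrib)
qed

text \<open>
  In a uniformly random order of S, the probability that exactly t players of S - {i, j} precede
  i is (m - t) / (m (m + 1)) with j after i and (t + 1) / (m (m + 1)) with j before i.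
\<close>

lemma shapley_eq_average_distinguished:
  assumes "finite S" "i \<in> S" "j \<in> S" "i \<noteq> j" "card S = m + 1"
    and "\<And>T. T \<subseteq> S - {i, j} \<Longrightarrow> rho h a (insert i T) - rho h a T = \<delta> (card T)"
    and "\<And>T. T \<subseteq> S - {i, j} \<Longrightarrow>
           rho h a (insert i (insert j T)) - rho h a (insert j T) = \<epsilon> (card T)"
  shows "shapley h a i S = (\<Sum>t<m. real (m - t) * \<delta> t + real (t + 1) * \<epsilon> t) / (real m * real (m + 1))"
proof -
  define A where "A = S - {i, j}"
  have A: "finite A" "j \<notin> A" "S - {i} = insert j A" "card A = m - 1"
    using assms(1-5) by (auto simp: A_def card_Diff_subset)
  have "2 \<le> card S"
    using card_mono[OF assms(1), of "{i, j}"] assms(2-4) by simp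
  then have m: "0 < m"
    using assms(5) by simp
  have w: "shapley_weight (card S) (card (insert j T)) = shapley_weight (m + 1) (card T + 1)"
    if "T \<in> Pow A" for T
    using that A(1,2) finite_subset assms(5) by (metis PowD card_insert_disjoint in_mono Suc_eq_plus1)
  have "shapley h a i S = (\<Sum>T\<in>Pow A. shapley_weight (m + 1) (card T) * \<delta> (card T))
      + (\<Sum>T\<in>Pow A. shapley_weight (m + 1) (card T + 1) * \<epsilon> (card T))"
    unfolding shapley_eq_weighted_sum A(3) sum_Pow_insert[OF A(1,2)]
    using assms(5-7) w by (intro arg_cong2[where f = "(+)"] sum.cong) (auto simp: A_def)
  also have "\<dots> = (\<Sum>t<m. real (m - 1 choose t) * shapley_weight (m + 1) t * \<delta> t)
      + (\<Sum>t<m. real (m - 1 choose t) * shapley_weight (m + 1) (t + 1) * \<epsilon> t)"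
    using sum_Pow_card[OF A(1), of "\<lambda>t. shapley_weight (m + 1) t * \<delta> t"]
      sum_Pow_card[OF A(1), of "\<lambda>t. shapley_weight (m + 1) (t + 1) * \<epsilon> t"]
    unfolding A(4) lessThan_Suc_atMost[symmetric] by (simp only: mult.assoc Suc_diff_1[OF m])
  also have "\<dots> = (\<Sum>t<m. (real (m - t) * \<delta> t + real (t + 1) * \<epsilon> t) / (real m * real (m + 1)))"
    unfolding sum.distrib[symmetric]
  proof (rule sum.cong[OF refl])
    fix t assume "t \<in> {..<m}"
    then have t: "t < m" by simp
    show "real (m - 1 choose t) * shapley_weight (m + 1) t * \<delta> t
        + real (m - 1 choose t) * shapley_weight (m + 1) (t + 1) * \<epsilon> t
        = (real (m - t) * \<delta> t + real (t + 1) * \<epsilon> t) / (real m * real (m + 1))"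
      unfolding binomial_times_shapley_weight_without[OF t] binomial_times_shapley_weight_with[OF t]
      by (simp only: add_divide_distrib times_divide_eq_left)
  qed
  also have "\<dots> = (\<Sum>t<m. real (m - t) * \<delta> t + real (t + 1) * \<epsilon> t) / (real m * real (m + 1))"
    by (simp add: sum_divide_distrib)
  finally show ?thesis .
qed

section \<open>Shapley values in the atomic game\<close>

lemma pool_stake_insert:
  assumes "finite T" "i \<notin> T"
  shows "pool_stake a (insert i T) = stake a i + pool_stake a T"
  using assms unfolding pool_stake_def by simp

lemma pool_stake_eq_card:
  assumes "0 \<notin> T"
  shows "pool_stake a T = card T"
proof -
  have "pool_stake a T = (\<Sum>i\<in>T. 1)"
    unfolding pool_stake_def by (rule sum.cong) (use assms in \<open>auto simp: stake_def\<close>)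
  then show ?thesis
    by simp
qed

lemma pool_stake_initial_segment: "pool_stake a {0..m} = a + m"
proof -
  have "{0..m} = insert 0 {1..m}"
    by auto
  then show ?thesis
    by (simp add: pool_stake_insert pool_stake_eq_card stake_def)
qed

lemma rho_insert_diff:
  assumes "finite T" "i \<notin> T"
  shows "rho h a (insert i T) - rho h a T
    = (if pool_stake a T < h \<and> h \<le> pool_stake a T + stake a i then 1 else 0)"
  using assms by (auto simp: rho_def pool_stake_insert)

lemma pool_stake_partition:
  assumes "partition_on (players n) P"
  shows "pool_stake a (players n) = (\<Sum>S\<in>P. pool_stake a S)"
proof -
  have "\<forall>S\<in>P. finite S"
    using partition_onD1[OF assms] by (metis Union_upper finite_atLeastLessThan finite_subset players_def)
  then show ?thesis
    unfolding pool_stake_def partition_onD1[OF assms]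
    using sum.Union_disjoint_sets partition_onD2[OF assms] by auto
qed

text \<open>
  The shares of the large player and of a unit player in a pool formed by the large player and
  m unit players; the truncated difference m + 1 - h vanishes unless h \<le> m.
\<close>

definition big_share :: "nat \<Rightarrow> nat \<Rightarrow> nat \<Rightarrow> real" where
  "big_share h a m = real (min (m + 1) h - (h - a)) / real (m + 1)"

definition small_share :: "nat \<Rightarrow> nat \<Rightarrow> nat \<Rightarrow> real" where
  "small_share h a m =
     (real (m + 1 - h) + (if h - a \<le> m then real (h - a) else 0)) / (real m * real (m + 1))"

lemma shapley_small_without_big:
  assumes "finite S" "0 \<notin> S" "i \<in> S" "0 < h" "h \<le> card S"
  shows "shapley h a i S = 1 / real (card S)"
proof -
  have "shapley h a i S = (\<Sum>t<card S. if t = h - 1 then 1 else 0) / real (card S)"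
  proof (rule shapley_eq_average[OF assms(1,3)])
    fix T assume "T \<subseteq> S - {i}"
    then have T: "finite T" "0 \<notin> T" "i \<notin> T"
      using assms(1,2) finite_subset[of T S] by auto
    have "i \<noteq> 0"
      using assms(2,3) by metis
    then have "pool_stake a T = card T" "stake a i = 1"
      using T by (simp_all add: pool_stake_eq_card stake_def)
    moreover have "card T < h \<and> h \<le> card T + 1 \<longleftrightarrow> card T = h - 1"
      using assms(4) by arith
    ultimately show "rho h a (insert i T) - rho h a T = (if card T = h - 1 then 1 else 0)"
      by (simp add: rho_insert_diff[OF T(1,3)])
  qed
  also have "(\<Sum>t<card S. if t = h - 1 then 1 else 0) = (1 :: real)"
    using assms(4,5) by (simp add: sum.delta)
  finally show ?thesis .
qed

lemma shapley_big:
  assumes "finite S" "0 \<in> S"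
  shows "shapley h a 0 S = big_share h a (card S - 1)"
proof -
  have "shapley h a 0 S = (\<Sum>t<card S. if h - a \<le> t \<and> t < h then 1 else 0) / real (card S)"
  proof (rule shapley_eq_average[OF assms])
    fix T assume "T \<subseteq> S - {0}"
    then have T: "finite T" "0 \<notin> T"
      using assms(1) finite_subset[of T S] by auto
    then have "pool_stake a T = card T"
      by (simp add: pool_stake_eq_card)
    moreover have "card T < h \<and> h \<le> card T + a \<longleftrightarrow> h - a \<le> card T \<and> card T < h"
      by arith
    ultimately show "rho h a (insert 0 T) - rho h a T = (if h - a \<le> card T \<and> card T < h then 1 else 0)"
      by (simp add: rho_insert_diff[OF T] stake_def)
  qed
  also have "(\<Sum>t<card S. if h - a \<le> t \<and> t < h then 1 else 0)
      = real (card ({..<card S} \<inter> {t. h - a \<le> t \<and> t < h}))"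
    by (simp only: sum.If_cases finite_lessThan sum_constant sum.neutral_const)
  also have "{..<card S} \<inter> {t. h - a \<le> t \<and> t < h} = {h - a..<min (card S) h}"
    by auto
  finally have "shapley h a 0 S = real (min (card S) h - (h - a)) / real (card S)"
    unfolding card_atLeastLessThan .
  moreover have "card S - 1 + 1 = card S"
    using assms card_gt_0_iff[of S] by auto
  ultimately show ?thesis
    unfolding big_share_def by (simp only:)
qed

lemma shapley_small_with_big:
  assumes "finite S" "0 \<in> S" "i \<in> S" "i \<noteq> 0" "a < h"
  shows "shapley h a i S = small_share h a (card S - 1)"
proof -
  define m where "m = card S - 1"
  have "0 < card S"
    using assms(1,2) card_gt_0_iff by blast
  then have card: "card S = m + 1"
    by (simp add: m_def)
  have "shapley h a i S = (\<Sum>t<m. real (m - t) * (if t = h - 1 then 1 else 0)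
      + real (t + 1) * (if t + 1 = h - a then 1 else 0)) / (real m * real (m + 1))"
  proof (rule shapley_eq_average_distinguished[OF assms(1,3,2,4) card])
    fix T assume "T \<subseteq> S - {i, 0}"
    then have T: "finite T" "0 \<notin> T" "i \<notin> T"
      using assms(1) finite_subset[of T S] by auto
    then show "rho h a (insert i T) - rho h a T = (if card T = h - 1 then 1 else 0)"
      using assms(4,5) by (auto simp: rho_insert_diff pool_stake_eq_card stake_def)
    have "pool_stake a (insert 0 T) = a + card T"
      using T by (simp add: pool_stake_insert pool_stake_eq_card stake_def)
    then show "rho h a (insert i (insert 0 T)) - rho h a (insert 0 T)
        = (if card T + 1 = h - a then 1 else 0)"
      using T assms(4,5) by (auto simp: rho_insert_diff stake_def)
  qed
  also have "\<dots> = small_share h a m"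
  proof -
    have "(\<Sum>t<m. real (m - t) * (if t = h - 1 then 1 else 0))
        = (\<Sum>t<m. if t = h - 1 then real (m - t) else 0)"
      by (rule sum.cong) auto
    also have "\<dots> = real (m + 1 - h)"
      using assms(5) by (simp add: Suc_diff_Suc)
    finally have without_big: "(\<Sum>t<m. real (m - t) * (if t = h - 1 then 1 else 0)) = real (m + 1 - h)" .
    have "(\<Sum>t<m. real (t + 1) * (if t + 1 = h - a then 1 else 0))
        = (\<Sum>t<m. if t = h - a - 1 then real (t + 1) else 0)"
      using assms(5) by (intro sum.cong) auto
    also have "\<dots> = (if h - a \<le> m then real (h - a) else 0)"
      using assms(5) by simp arith
    finally have with_big: "(\<Sum>t<m. real (t + 1) * (if t + 1 = h - a then 1 else 0))
        = (if h - a \<le> m then real (h - a) else 0)" .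
    show ?thesis
      unfolding small_share_def sum.distrib without_big with_big ..
  qed
  finally show ?thesis
    unfolding m_def .
qed

lemma shapley_singleton:
  assumes "stake a i < h"
  shows "shapley h a i {i} = 0"
proof -
  have "Pow ({i} - {i}) = {{}}"
    by auto
  then show ?thesis
    using assms by (simp add: shapley_def rho_def pool_stake_def)
qed

section \<open>An equilibrium with one mixed pool\<close>

lemma is_NE_if_share_bounds:
  assumes "partition_on (players n) P" "\<forall>S\<in>P. winning h a S" "a < h" "1 < h" "0 \<le> d"
    and own: "\<And>S i. S \<in> P \<Longrightarrow> i \<in> S \<Longrightarrow> real (stake a i) / d \<le> shapley h a i S"
    and deviate: "\<And>S S' i. S \<in> P \<Longrightarrow> S' \<in> P \<Longrightarrow> S' \<noteq> S \<Longrightarrow> i \<in> S \<Longrightarrow>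
      shapley h a i (insert i S') \<le> real (stake a i) / d"
  shows "is_NE n h a P"
proof -
  have "(\<forall>S'\<in>P. S' \<noteq> S \<longrightarrow> shapley h a i (insert i S') \<le> shapley h a i S)
      \<and> shapley h a i {i} \<le> shapley h a i S" if S: "S \<in> P" and i: "i \<in> S" for S i
  proof
    show "\<forall>S'\<in>P. S' \<noteq> S \<longrightarrow> shapley h a i (insert i S') \<le> shapley h a i S"
      using deviate[OF S _ _ i] own[OF S i] by (meson order_trans)
    have "shapley h a i {i} = 0"
      using assms(3,4) by (intro shapley_singleton) (simp add: stake_def)
    also have "0 \<le> real (stake a i) / d"
      using assms(5) by simp
    also have "\<dots> \<le> shapley h a i S"
      using own[OF S i] .
    finally show "shapley h a i {i} \<le> shapley h a i S" .
  qed
  then show ?thesis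
    unfolding is_NE_def using assms(1,2) by blast
qed

lemma shapley_small_join_block_le:
  assumes "finite X" "0 \<notin> X" "i \<notin> X" "i \<noteq> 0" "0 < h" "2 * h - 2 \<le> card X"
  shows "shapley h a i (insert i X) \<le> 1 / real (2 * h - 1)"
proof -
  have card: "card (insert i X) = card X + 1"
    using assms(1,3) by simp
  have "shapley h a i (insert i X) = 1 / real (card X + 1)"
    using shapley_small_without_big[of "insert i X" i h a] assms card by simp
  also have "\<dots> \<le> 1 / real (2 * h - 1)"
    using assms(5,6) by (intro divide_left_mono) auto
  finally show ?thesis .
qed

lemma shapley_big_join_block_le:
  assumes "finite X" "0 \<notin> X" "a < h" "2 * h - 2 \<le> card X"
  shows "shapley h a 0 (insert 0 X) \<le> real a / real (2 * h - 1)"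
proof -
  have "shapley h a 0 (insert 0 X) = big_share h a (card X)"
    using shapley_big[of "insert 0 X" h a] assms(1,2) by simp
  also have "\<dots> = real a / real (card X + 1)"
    using assms(3,4) by (simp add: big_share_def min_absorb2)
  also have "\<dots> \<le> real a / real (2 * h - 1)"
    using assms(3,4) by (intro divide_left_mono) auto
  finally show ?thesis .
qed

lemma small_share_at_lower_end:
  assumes "0 < a" "a < h"
  shows "small_share h a (h - a) = 1 / real (h - a + 1)"
proof -
  have "h - a + 1 - h = 0" "0 < h - a"
    using assms by auto
  then show ?thesis
    unfolding small_share_def by simp
qed

lemma small_share_beyond_upper_end:
  assumes "0 < a" "a < h"
  shows "small_share h a (2 * h - 1) < 1 / real (2 * h - 1)"
proof -
  have "small_share h a (2 * h - 1) = (2 * real h - real a) / ((2 * real h - 1) * (2 * real h))"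
    using assms by (simp add: small_share_def of_nat_diff)
  also have "\<dots> < 1 / (2 * real h - 1)"
    using assms by (simp add: field_simps)
  finally show ?thesis
    using assms by (simp add: of_nat_diff)
qed

lemma big_share_ge_if_small_share_lt:
  assumes "a < h" "h - a \<le> m" "m \<le> 2 * h - 2"
    and "small_share h a (m + 1) < 1 / real (2 * h - 1)"
  shows "real a / real (2 * h - 1) \<le> big_share h a m"
proof (cases "h \<le> m + 1")
  case True
  then have "big_share h a m = real a / real (m + 1)"
    using assms(1) by (simp add: big_share_def)
  moreover have "real a / real (2 * h - 1) \<le> real a / real (m + 1)"
    using assms(1,3) by (intro divide_left_mono) auto
  ultimately show ?thesis
    by simp
next
  case False
  have "small_share h a (m + 1) = real (h - a) / (real (m + 1) * real (m + 2))"
    using False assms(2) by (simp add: small_share_def)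
  moreover have "x / y < 1 / z \<Longrightarrow> 0 < y \<Longrightarrow> 0 < z \<Longrightarrow> x * z < y" for x y z :: real
    by (simp add: field_simps)
  ultimately have "real (h - a) * real (2 * h - 1) < real (m + 1) * real (m + 2)"
    using assms(1,4) by simp
  also have "\<dots> \<le> real (m + 1) * (real (2 * h - 1) - real a)"
    using False assms(1) by (intro mult_left_mono) auto
  finally have ineq: "real a * real (m + 1) \<le> (real (m + 1) - real (h - a)) * real (2 * h - 1)"
    by (simp add: algebra_simps)
  have "big_share h a m = (real (m + 1) - real (h - a)) / real (m + 1)"
    using False assms(2) by (simp add: big_share_def of_nat_diff)
  moreover have "x * z \<le> y * w \<Longrightarrow> 0 < z \<Longrightarrow> 0 < w \<Longrightarrow> x / w \<le> y / z" for x y z w :: real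
    by (simp add: field_simps)
  ultimately show ?thesis
    using ineq assms(1) by simp
qed

lemma exists_critical_mixed_size:
  assumes "0 < a" "a < h"
  obtains m where "h - a \<le> m" "m \<le> 2 * h - 2"
    "1 / real (2 * h - 1) \<le> small_share h a m"
    "small_share h a (m + 1) < 1 / real (2 * h - 1)"
    "real a / real (2 * h - 1) \<le> big_share h a m"
proof -
  define M where "M = {m. h - a \<le> m \<and> m \<le> 2 * h - 2 \<and> 1 / real (2 * h - 1) \<le> small_share h a m}"
  have "1 / real (2 * h - 1) \<le> 1 / real (h - a + 1)"
    using assms by (intro divide_left_mono) auto
  then have "h - a \<in> M"
    using assms by (auto simp: M_def small_share_at_lower_end)
  moreover have "finite M"
    unfolding M_def by simp
  ultimately obtain ms where "ms \<in> M" and max: "\<And>m. m \<in> M \<Longrightarrow> m \<le> ms"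
    using Max_in Max_ge by blast
  then have ms: "h - a \<le> ms" "ms \<le> 2 * h - 2" "1 / real (2 * h - 1) \<le> small_share h a ms"
    unfolding M_def by auto
  have next_small: "small_share h a (ms + 1) < 1 / real (2 * h - 1)"
  proof (cases "ms + 1 \<le> 2 * h - 2")
    case True
    have "ms + 1 \<notin> M"
      using max by fastforce
    then show ?thesis
      using True ms(1) unfolding M_def by auto
  next
    case False
    then have "ms + 1 = 2 * h - 1"
      using ms(2) assms(2) by arith
    then show ?thesis
      using small_share_beyond_upper_end[OF assms] by simp
  qed
  show ?thesis
    by (rule that[OF ms next_small big_share_ge_if_small_share_lt[OF assms(2) ms(1,2) next_small]])
qed

lemma exists_partition_on_blocks_div_mod:
  assumes "finite R" "card R = k * q + r" "r \<le> k" "0 < q"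
  shows "\<exists>Q. partition_on R Q \<and> (\<forall>X\<in>Q. card X = q \<or> card X = q + 1)"
  using assms(1-3)
proof (induction k arbitrary: R r)
  case 0
  then show ?case
    by (intro exI[of _ "{}"]) (simp add: partition_on_empty)
next
  case (Suc k)
  define c where "c = (if r = 0 then q else q + 1)"
  define r' where "r' = r - 1"
  have "card R = c + (k * q + r')"
    using Suc.prems(2,3) by (simp add: c_def r'_def)
  then obtain X where X: "X \<subseteq> R" "card X = c"
    using obtain_subset_with_card_n[of c R] by auto
  have "card (R - X) = k * q + r'"
    using X Suc.prems(1) \<open>card R = c + (k * q + r')\<close> by (simp add: card_Diff_subset finite_subset)
  moreover have "r' \<le> k"
    using Suc.prems(3) by (simp add: r'_def)
  ultimately obtain Q where Q: "partition_on (R - X) Q" "\<forall>X\<in>Q. card X = q \<or> card X = q + 1"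
    using Suc.IH[of "R - X"] Suc.prems(1) by blast
  have "disjnt X (\<Union>Q)"
    using partition_onD1[OF Q(1)] by (auto simp: disjnt_def)
  moreover have "X \<noteq> {}"
    using X(2) assms(4) by (auto simp: c_def split: if_splits)
  ultimately have "partition_on R (insert X Q)"
    using partition_on_insert Q(1) X(1) by blast
  then show ?case
    using Q(2) X(2) by (intro exI[of _ "insert X Q"]) (auto simp: c_def)
qed

lemma exists_partition_on_blocks:
  assumes "finite R" "0 < q" "(q - 1) * q \<le> card R"
  shows "\<exists>Q. partition_on R Q \<and> (\<forall>X\<in>Q. card X = q \<or> card X = q + 1)"
proof (rule exists_partition_on_blocks_div_mod[OF assms(1) _ _ assms(2)])
  show "card R = card R div q * q + card R mod q"
    by simp
  have "q - 1 \<le> card R div q"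
    using assms(2,3) by (metis div_le_mono nonzero_mult_div_cancel_right not_gr0)
  then show "card R mod q \<le> card R div q"
    using mod_less_divisor[OF assms(2), of "card R"] by linarith
qed

context
  fixes n h a m :: nat and Q :: "nat set set"
  assumes large: "0 < a" "a < h"
    and mixed: "h - a \<le> m" "1 / real (2 * h - 1) \<le> small_share h a m"
      "small_share h a (m + 1) < 1 / real (2 * h - 1)" "real a / real (2 * h - 1) \<le> big_share h a m"
    and partition: "partition_on (players n) (insert {0..m} Q)"
    and blocks: "\<And>X. X \<in> Q \<Longrightarrow> 0 \<notin> X \<and> 2 * h - 2 \<le> card X \<and> card X \<le> 2 * h - 1"
begin

lemma finite_pool_of_mixed_partition:
  assumes "S \<in> insert {0..m} Q"
  shows "finite S"
proof -
  have "S \<subseteq> players n"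
    using assms partition_onD1[OF partition] by blast
  then show ?thesis
    by (rule finite_subset) (simp add: players_def)
qed

lemma h_le_card_block:
  assumes "X \<in> Q"
  shows "h \<le> card X"
  using blocks[OF assms] large by linarith

lemma share_in_mixed_partition_ge:
  assumes "S \<in> insert {0..m} Q" "i \<in> S"
  shows "real (stake a i) / real (2 * h - 1) \<le> shapley h a i S"
proof (cases "S = {0..m}")
  case True
  then show ?thesis
    using shapley_big[of S h a] shapley_small_with_big[of S i a h] large(2) mixed(2,4) assms(2)
    by (cases "i = 0") (simp_all add: stake_def)
next
  case False
  then have S: "S \<in> Q"
    using assms(1) by simp
  then have "i \<noteq> 0"
    using blocks assms(2) by metis
  have "1 / real (2 * h - 1) \<le> 1 / real (card S)"
    using blocks[OF S] large by (intro divide_left_mono) auto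
  also have "\<dots> = shapley h a i S"
    using shapley_small_without_big[of S i h a] finite_pool_of_mixed_partition[OF assms(1)]
      blocks[OF S] h_le_card_block[OF S] assms(2) large by simp
  finally show ?thesis
    using \<open>i \<noteq> 0\<close> by (simp add: stake_def)
qed

lemma deviation_from_mixed_partition_le:
  assumes "S \<in> insert {0..m} Q" "S' \<in> insert {0..m} Q" "S' \<noteq> S" "i \<in> S"
  shows "shapley h a i (insert i S') \<le> real (stake a i) / real (2 * h - 1)"
proof -
  have "i \<notin> S'"
    using disjointD[OF partition_onD2[OF partition] assms(2,1,3)] assms(4) by blast
  show ?thesis
  proof (cases "S' = {0..m}")
    case True
    then have "i \<noteq> 0"
      using \<open>i \<notin> S'\<close> by simp
    then have "shapley h a i (insert i S') = small_share h a (m + 1)"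
      using shapley_small_with_big[of "insert i S'" i a h] \<open>i \<notin> S'\<close> True large(2) by simp
    then show ?thesis
      using mixed(3) \<open>i \<noteq> 0\<close> by (simp add: stake_def)
  next
    case False
    then have X: "S' \<in> Q"
      using assms(2) by simp
    then show ?thesis
      using shapley_big_join_block_le[of S' a h] shapley_small_join_block_le[of S' i h a]
        finite_pool_of_mixed_partition[OF assms(2)] blocks[OF X] \<open>i \<notin> S'\<close> large
      by (cases "i = 0") (simp_all add: stake_def)
  qed
qed

lemma winning_pool_of_mixed_partition:
  assumes "S \<in> insert {0..m} Q"
  shows "winning h a S"
proof (cases "S = {0..m}")
  case True
  then show ?thesis
    using mixed(1) by (simp add: winning_def pool_stake_initial_segment)
next
  case False
  then have "S \<in> Q"
    using assms by simp
  then show ?thesis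
    using blocks h_le_card_block pool_stake_eq_card[of S a] by (simp add: winning_def)
qed

lemma is_NE_mixed_pool_and_blocks: "is_NE n h a (insert {0..m} Q)"
  using is_NE_if_share_bounds[OF partition _ large(2) _ _ share_in_mixed_partition_ge
      deviation_from_mixed_partition_le] winning_pool_of_mixed_partition large
  by auto

end

lemma exists_mixed_pool_and_blocks:
  assumes "2 \<le> h" "m < n" "(2 * h - 3) * (2 * h - 2) \<le> n - (m + 1)"
  obtains Q where "partition_on (players n) (insert {0..m} Q)"
    "\<And>X. X \<in> Q \<Longrightarrow> 0 \<notin> X \<and> 2 * h - 2 \<le> card X \<and> card X \<le> 2 * h - 1"
proof -
  define R where "R = {m + 1..<n}"
  have "(2 * h - 2 - 1) * (2 * h - 2) \<le> card R"
    using assms(3) by (simp add: R_def)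
  then obtain Q where Q: "partition_on R Q" "\<forall>X\<in>Q. card X = 2 * h - 2 \<or> card X = 2 * h - 2 + 1"
    using exists_partition_on_blocks[of R "2 * h - 2"] assms(1) by (auto simp: R_def)
  have "partition_on (players n) (insert {0..m} Q)"
  proof (subst partition_on_insert)
    show "disjnt {0..m} (\<Union>Q)"
      unfolding partition_onD1[OF Q(1), symmetric] R_def disjnt_def by auto
    have "players n - {0..m} = R"
      using assms(2) by (auto simp: players_def R_def)
    then show "partition_on (players n - {0..m}) Q \<and> {0..m} \<subseteq> players n \<and> {0..m} \<noteq> {}"
      using Q(1) assms(2) by (auto simp: players_def)
  qed
  moreover have "0 \<notin> X \<and> 2 * h - 2 \<le> card X \<and> card X \<le> 2 * h - 1" if "X \<in> Q" for X
  proof -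
    have "X \<subseteq> R"
      using that partition_onD1[OF Q(1)] by blast
    then show ?thesis
      using that Q(2) assms(1) by (auto simp: R_def)
  qed
  ultimately show ?thesis
    using that by blast
qed

lemma pool_stake_players_less:
  assumes "partition_on (players n) (insert B Q)" "B \<notin> Q"
    and "pool_stake a B < 3 * h" "\<And>X. X \<in> Q \<Longrightarrow> pool_stake a X < 2 * h"
  shows "pool_stake a (players n) < h * (2 * card (insert B Q) + 1)"
proof -
  have "finite Q"
    using finite_elements[OF _ assms(1)] by (simp add: players_def)
  have "pool_stake a (players n) = pool_stake a B + (\<Sum>X\<in>Q. pool_stake a X)"
    using pool_stake_partition[OF assms(1)] \<open>finite Q\<close> assms(2) by simp
  also have "\<dots> < 3 * h + (\<Sum>X\<in>Q. 2 * h)"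
    using assms(3,4) by (intro add_less_le_mono sum_mono) (auto intro: less_imp_le)
  also have "\<dots> = h * (2 * card (insert B Q) + 1)"
    using \<open>finite Q\<close> assms(2) by (simp add: algebra_simps)
  finally show ?thesis .
qed

lemma exists_NE_with_stake_bound:
  assumes "0 < a" "a < h" "(2 * h - 3) * (2 * h - 2) + (2 * h - 1) \<le> n"
  shows "\<exists>P. is_NE n h a P \<and> pool_stake a (players n) < h * (2 * card P + 1)"
proof -
  obtain m where m: "h - a \<le> m" "m \<le> 2 * h - 2"
    "1 / real (2 * h - 1) \<le> small_share h a m"
    "small_share h a (m + 1) < 1 / real (2 * h - 1)"
    "real a / real (2 * h - 1) \<le> big_share h a m"
    using exists_critical_mixed_size[OF assms(1,2)] .
  have "2 \<le> h" "m < n" "(2 * h - 3) * (2 * h - 2) \<le> n - (m + 1)"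
    using assms m(2) by linarith+
  then obtain Q where P: "partition_on (players n) (insert {0..m} Q)"
    and blocks: "\<And>X. X \<in> Q \<Longrightarrow> 0 \<notin> X \<and> 2 * h - 2 \<le> card X \<and> card X \<le> 2 * h - 1"
    using exists_mixed_pool_and_blocks by metis
  have "is_NE n h a (insert {0..m} Q)"
    using is_NE_mixed_pool_and_blocks[OF assms(1,2) m(1,3,4,5) P blocks] .
  moreover have "pool_stake a (players n) < h * (2 * card (insert {0..m} Q) + 1)"
  proof (rule pool_stake_players_less[OF P])
    show "{0..m} \<notin> Q"
      using blocks by force
    show "pool_stake a {0..m} < 3 * h"
      using m(2) assms(2) by (simp add: pool_stake_initial_segment)
    show "pool_stake a X < 2 * h" if "X \<in> Q" for X
      using blocks[OF that] pool_stake_eq_card[of X a] assms(2) by simp linarith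
  qed
  ultimately show ?thesis
    by blast
qed

section \<open>The price of stability\<close>

lemma W_le_pool_stake:
  assumes "partition_on (players n) P"
  shows "h * W h a P \<le> pool_stake a (players n)"
proof -
  have "finite P"
    using assms finite_elements by (auto simp: players_def)
  have "h * W h a P = (\<Sum>S | S \<in> P \<and> winning h a S. h)"
    by (simp add: W_def)
  also have "\<dots> \<le> (\<Sum>S | S \<in> P \<and> winning h a S. pool_stake a S)"
    by (intro sum_mono) (simp add: winning_def)
  also have "\<dots> \<le> (\<Sum>S\<in>P. pool_stake a S)"
    using \<open>finite P\<close> by (intro sum_mono2) auto
  also have "\<dots> = pool_stake a (players n)"
    using pool_stake_partition[OF assms] ..
  finally show ?thesis .
qed

lemma finite_partitions_of_players: "finite {P. partition_on (players n) P}"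
  by (simp add: finitely_many_partition_on players_def)

lemma OPT_le_pool_stake: "h * OPT n h a \<le> pool_stake a (players n)"
proof -
  have "partition_on (players n) ((\<lambda>i. {i}) ` players n)"
    by (rule partition_on_singletons)
  then have "OPT n h a \<in> {W h a P | P. partition_on (players n) P}"
    unfolding OPT_def using finite_partitions_of_players by (intro Max_in) auto
  then show ?thesis
    using W_le_pool_stake by auto
qed

lemma W_eq_card:
  assumes "\<forall>S\<in>P. winning h a S"
  shows "W h a P = card P"
proof -
  have "{S \<in> P. winning h a S} = P"
    using assms by auto
  then show ?thesis
    by (simp add: W_def)
qed

lemma PoS_le:
  assumes "is_NE n h a P"
  shows "PoS n h a \<le> real (OPT n h a) / real (W h a P)"
proof -
  have "finite {P. is_NE n h a P}"
    using finite_partitions_of_players by (rule rev_finite_subset) (auto simp: is_NE_def)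
  then show ?thesis
    unfolding PoS_def using assms by (intro Min_le) auto
qed

theorem theorem3p10:
  fixes n h a :: nat
  assumes "2 \<le> a" and "a \<le> h - 1"
    and "n \<ge> (2 * h - 1)^2 + h"
  shows "(\<exists>P. is_NE n h a P) \<and> PoS n h a \<le> 2"
proof -
  have "3 \<le> h"
    using assms(1,2) by linarith
  then obtain k where "h = 3 + k"
    using le_Suc_ex by blast
  then have "(2 * h - 3) * (2 * h - 2) + (2 * h - 1) \<le> (2 * h - 1)^2 + h"
    by (simp add: power2_eq_square algebra_simps)
  then obtain P where NE: "is_NE n h a P" and stake: "pool_stake a (players n) < h * (2 * card P + 1)"
    using exists_NE_with_stake_bound[of a h n] assms by fastforce
  have W: "W h a P = card P"
    using NE by (simp add: is_NE_def W_eq_card)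
  have "h * OPT n h a < h * (2 * W h a P + 1)"
    using OPT_le_pool_stake[of h n a] stake unfolding W by linarith
  then have "real (OPT n h a) \<le> 2 * real (W h a P)"
    by (simp only: mult_less_cancel1) linarith
  then have "real (OPT n h a) / real (W h a P) \<le> 2"
    by (cases "W h a P = 0") (simp_all add: divide_le_eq)
  then show ?thesis
    using NE PoS_le[OF NE] by auto
qed

end
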